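(* For a causal stable system $P$ on $\mathcal{L}_{2e+}^n$, $\theta(P)\le\theta_e(P)$. Moreover, if $\theta(P)\in[0,\pi/2]$, then $\theta(P)=\theta_e(P)$.
   Context: $\mathcal{L}_2^n$: measurable $u:\mathbb{R}\to\mathbb{R}^n$ with $\|u\|_2^2=\int|u(t)|^2dt<\infty$, inner product $\langle u,v\rangle=\int u(t)^Tv(t)\,dt$; $\mathcal{L}_{2+}=\{u\in\mathcal{L}_2:u(t)=0\ \text{for}\ t<0\}$. For $T\ge0$, $(\Gamma_Tu)(t)=u(t)$ for $t\le T$, $0$ for $t>T$, and $u_T=\Gamma_Tu$; $\mathcal{L}_{2e+}=\{u:u_T\in\mathcal{L}_{2+}\ \forall T\ge0\}$. A system is an operator $P:\mathcal{L}_{2e+}\to\mathcal{L}_{2e+}$ with $P0=0$, $P\ne0$; causal if $\Gamma_TP=\Gamma_TP\Gamma_T$ for all $T\ge0$; a causal system is stable if $Pu\in\mathcal{L}_{2+}$ for all $u\in\mathcal{L}_{2+}$ and $\sup_{0\ne u\in\mathcal{L}_{2+}}\|Pu\|_2/\|u\|_2<\infty$. The singular angle $\theta(P)\in[0,\pi]$ is given by $\cos\theta(P)=\inf\{\langle u,Pu\rangle/(\|u\|_2\|Pu\|_2):0\neq u\in\mathcal{L}_{2+},\ Pu\ne0\}$. The $\mathcal{L}_{2e}$ singular angle $\theta_e(P)\in[0,\pi]$ is given by $\cos\theta_e(P)=\inf\{\langle u_T,(Pu)_T\rangle/(\|u_T\|_2\|(Pu)_T\|_2): u\in\mathcal{L}_{2e+},\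 T>0,\ \|u_T\|_2\ne0,\ \|(Pu)_T\|_2\ne0\}$. *)

theory Defs
  imports "HOL-Analysis.Analysis"
begin

type_synonym 'n signal = "real \<Rightarrow> real ^ 'n"

definition L2 :: "'n::finite signal \<Rightarrow> bool" where
  "L2 u \<longleftrightarrow> u \<in> borel_measurable lborel \<and> integrable lborel (\<lambda>t. (norm (u t))\<^sup>2)"

definition L2p :: "'n::finite signal \<Rightarrow> bool" where
  "L2p u \<longleftrightarrow> L2 u \<and> (\<forall>t<0. u t = 0)"

definition trunc :: "real \<Rightarrow> 'n::finite signal \<Rightarrow> 'n signal" where
  "trunc T u = (\<lambda>t. if t \<le> T then u t else 0)"

definition L2ep :: "'n::finite signal \<Rightarrow> bool" where
  "L2ep u \<longleftrightarrow> (\<forall>T\<ge>0. L2p (trunc T u))"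

definition ip :: "'n::finite signal \<Rightarrow> 'n signal \<Rightarrow> real" where
  "ip u v = (LINT t|lborel. u t \<bullet> v t)"

definition nrm :: "'n::finite signal \<Rightarrow> real" where
  "nrm u = sqrt (LINT t|lborel. (norm (u t))\<^sup>2)"

text \<open>Signals are identified up to equality almost everywhere (as elements of L2).\<close>

definition is_system :: "('n::finite signal \<Rightarrow> 'n signal) \<Rightarrow> bool" where
  "is_system P \<longleftrightarrow> (\<forall>u. L2ep u \<longrightarrow> L2ep (P u))
     \<and> (AE t in lborel. P (\<lambda>_. 0) t = 0)
     \<and> (\<exists>u. L2ep u \<and> \<not> (AE t in lborel. P u t = 0))"

definition causal :: "('n::finite signal \<Rightarrow> 'n signal) \<Rightarrow> bool" where
  "causal P \<longleftrightarrow> (\<forall>u T. L2ep u \<and> T \<ge> 0 \<longrightarrow>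
     (AE t in lborel. trunc T (P u) t = trunc T (P (trunc T u)) t))"

definition stable :: "('n::finite signal \<Rightarrow> 'n signal) \<Rightarrow> bool" where
  "stable P \<longleftrightarrow> (\<forall>u. L2p u \<longrightarrow> L2p (P u))
     \<and> (\<exists>C. \<forall>u. L2p u \<and> nrm u \<noteq> 0 \<longrightarrow> nrm (P u) / nrm u \<le> C)"

definition sangle :: "('n::finite signal \<Rightarrow> 'n signal) \<Rightarrow> real" where
  "sangle P = arccos (Inf {ip u (P u) / (nrm u * nrm (P u)) | u.
       L2p u \<and> nrm u \<noteq> 0 \<and> nrm (P u) \<noteq> 0})"

definition sangle_e :: "('n::finite signal \<Rightarrow> 'n signal) \<Rightarrow> real" where
  "sangle_e P = arccos (Inf {ip (trunc T u) (trunc T (P u)) / (nrm (trunc T u) * nrm (trunc T (P u))) | u T.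
       L2ep u \<and> T > 0 \<and> nrm (trunc T u) \<noteq> 0 \<and> nrm (trunc T (P u)) \<noteq> 0})"

end

theory Submission imports Defs begin

text \<open>Every truncated cosine is the cosine of the input \<open>v = u\<^sub>T\<close>, except that the output norm
  \<open>\<parallel>P v\<parallel>\<close> in the denominator is replaced by the smaller \<open>\<parallel>(P v)\<^sub>T\<parallel>\<close> (causality); this can
  only push nonnegative cosines up, so \<open>\<theta>\<^sub>e(P) \<le> \<theta>(P)\<close> whenever \<open>\<theta>(P) \<le> \<pi>/2\<close>. Conversely, every
  cosine is the limit of the cosines of the truncations \<open>u\<^sub>T\<close>, \<open>(P u)\<^sub>T\<close> as \<open>T \<rightarrow> \<infinity>\<close> (dominated
  convergence), so the infimum over truncations is at most the infimum over \<open>\<L>\<^sub>2\<^sub>+\<close>, i.e.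
  \<open>\<theta>(P) \<le> \<theta>\<^sub>e(P)\<close>.\<close>

definition cosine :: "'n::finite signal \<Rightarrow> 'n signal \<Rightarrow> real" where
  "cosine u v = ip u v / (nrm u * nrm v)"

definition L2_cosines :: "('n::finite signal \<Rightarrow> 'n signal) \<Rightarrow> real set" where
  "L2_cosines P = {cosine u (P u) | u. L2p u \<and> nrm u \<noteq> 0 \<and> nrm (P u) \<noteq> 0}"

definition trunc_cosines :: "('n::finite signal \<Rightarrow> 'n signal) \<Rightarrow> real set" where
  "trunc_cosines P = {cosine (trunc T u) (trunc T (P u)) | u T.
     L2ep u \<and> T > 0 \<and> nrm (trunc T u) \<noteq> 0 \<and> nrm (trunc T (P u)) \<noteq> 0}"

lemma sangle_eq_arccos_Inf: "sangle P = arccos (Inf (L2_cosines P))"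
  unfolding sangle_def L2_cosines_def cosine_def ..

lemma sangle_e_eq_arccos_Inf: "sangle_e P = arccos (Inf (trunc_cosines P))"
  unfolding sangle_e_def trunc_cosines_def cosine_def ..

lemma L2_measurable: "L2 f \<Longrightarrow> f \<in> borel_measurable borel"
  by (simp add: L2_def)

lemma trunc_measurable: "f \<in> borel_measurable borel \<Longrightarrow> trunc T f \<in> borel_measurable borel"
proof -
  assume f: "f \<in> borel_measurable borel"
  have "trunc T f = (\<lambda>t. if t \<in> {..T} then f t else 0)"
    by (auto simp: trunc_def)
  then show ?thesis
    by (simp only:) (rule measurable_If_set, use f in auto)
qed

lemma L2_trunc: "L2 f \<Longrightarrow> L2 (trunc T f)"
proof -
  assume f: "L2 f"
  have m: "trunc T f \<in> borel_measurable borel"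
    using f by (intro trunc_measurable L2_measurable)
  have "integrable lborel (\<lambda>t. (norm (trunc T f t))\<^sup>2)"
    by (rule Bochner_Integration.integrable_bound[where f = "\<lambda>t. (norm (f t))\<^sup>2"])
       (use f m in \<open>auto simp: trunc_def L2_def\<close>)
  with m show ?thesis by (simp add: L2_def)
qed

lemma L2p_trunc: "L2p f \<Longrightarrow> L2p (trunc T f)"
  unfolding L2p_def using L2_trunc by (auto simp: trunc_def)

lemma L2p_imp_L2ep: "L2p f \<Longrightarrow> L2ep f"
  unfolding L2ep_def using L2p_trunc by blast

lemma L2ep_trunc_L2: "L2ep f \<Longrightarrow> T \<ge> 0 \<Longrightarrow> L2 (trunc T f)"
  unfolding L2ep_def L2p_def by blast

lemma nrm_nonneg: "nrm f \<ge> 0"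
  unfolding nrm_def by simp

lemma nrm_eq_sqrt_ip: "nrm f = sqrt (ip f f)"
  unfolding nrm_def ip_def by (simp add: power2_norm_eq_inner)

lemma ip_cong_AE:
  assumes "f \<in> borel_measurable borel" "f' \<in> borel_measurable borel"
    and "g \<in> borel_measurable borel" "g' \<in> borel_measurable borel"
    and "AE t in lborel. f t = f' t" "AE t in lborel. g t = g' t"
  shows "ip f g = ip f' g'"
  unfolding ip_def by (rule integral_cong_AE) (use assms in \<open>auto elim!: AE_mp\<close>)

lemma nrm_cong_AE:
  "f \<in> borel_measurable borel \<Longrightarrow> f' \<in> borel_measurable borel \<Longrightarrow>
    AE t in lborel. f t = f' t \<Longrightarrow> nrm f = nrm f'"
  unfolding nrm_eq_sqrt_ip using ip_cong_AE by metis

lemma nrm_trunc_le: "L2 f \<Longrightarrow> nrm (trunc T f) \<le> nrm f"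
  unfolding nrm_def
  by (intro real_sqrt_le_mono integral_mono) (use L2_trunc[of f T] in \<open>auto simp: L2_def trunc_def\<close>)

lemma abs_inner_le_weighted_sum_squares:
  fixes x y :: "'a::real_inner"
  assumes "s > 0"
  shows "\<bar>x \<bullet> y\<bar> \<le> (s * (norm x)\<^sup>2 + (norm y)\<^sup>2 / s) / 2"
proof -
  have "2 * s * (norm x * norm y) \<le> s\<^sup>2 * (norm x)\<^sup>2 + (norm y)\<^sup>2"
    using sum_squares_ge_zero[of "s * norm x - norm y" 0]
    by (simp add: power2_eq_square algebra_simps)
  moreover have "s * \<bar>x \<bullet> y\<bar> \<le> s * (norm x * norm y)"
    using Cauchy_Schwarz_ineq2[of x y] assms by simp
  ultimately have "s * (2 * \<bar>x \<bullet> y\<bar>) \<le> s\<^sup>2 * (norm x)\<^sup>2 + (norm y)\<^sup>2"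
    by linarith
  with assms show ?thesis
    by (simp add: field_simps power2_eq_square)
qed

lemma integrable_inner_L2:
  assumes "L2 f" "L2 g"
  shows "integrable lborel (\<lambda>t. f t \<bullet> g t)"
proof (rule Bochner_Integration.integrable_bound)
  show "integrable lborel (\<lambda>t. (1 * (norm (f t))\<^sup>2 + (norm (g t))\<^sup>2 / 1) / 2)"
    using assms unfolding L2_def by auto
  show "(\<lambda>t. f t \<bullet> g t) \<in> borel_measurable lborel"
    using L2_measurable[OF assms(1)] L2_measurable[OF assms(2)] by measurable
  show "AE t in lborel. norm (f t \<bullet> g t) \<le> norm ((1 * (norm (f t))\<^sup>2 + (norm (g t))\<^sup>2 / 1) / 2)"
    using abs_inner_le_weighted_sum_squares[of 1] by auto
qed

lemma abs_ip_le_nrm_mult: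
  assumes "L2 f" "L2 g" "nrm f \<noteq> 0" "nrm g \<noteq> 0"
  shows "\<bar>ip f g\<bar> \<le> nrm f * nrm g"
proof -
  define A where "A = (LINT t|lborel. (norm (f t))\<^sup>2)"
  define B where "B = (LINT t|lborel. (norm (g t))\<^sup>2)"
  have nrm_fg: "nrm f = sqrt A" "nrm g = sqrt B"
    unfolding A_def B_def nrm_def by auto
  then have pos: "A > 0" "B > 0"
    using assms(3,4) unfolding A_def B_def by (auto simp: less_le)
  define s where "s = sqrt B / sqrt A"
  have "s > 0"
    using pos unfolding s_def by auto
  have "\<bar>ip f g\<bar> \<le> (LINT t|lborel. \<bar>f t \<bullet> g t\<bar>)"
    unfolding ip_def by (rule integral_abs_bound)
  also have "\<dots> \<le> (LINT t|lborel. (s * (norm (f t))\<^sup>2 + (norm (g t))\<^sup>2 / s) / 2)"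
    using integrable_inner_L2[OF assms(1,2)] assms(1,2) abs_inner_le_weighted_sum_squares[OF \<open>s > 0\<close>]
    unfolding L2_def by (intro integral_mono) auto
  also have "\<dots> = (s * A + B / s) / 2"
    using assms(1,2) unfolding L2_def A_def B_def by simp
  also have "\<dots> = sqrt A * sqrt B"
    using pos unfolding s_def by (simp add: field_simps)
  finally show ?thesis
    using nrm_fg by simp
qed

lemma abs_cosine_le_1:
  assumes "L2 f" "L2 g"
  shows "\<bar>cosine f g\<bar> \<le> 1"
proof (cases "nrm f = 0 \<or> nrm g = 0")
  case True
  then show ?thesis
    unfolding cosine_def by auto
next
  case False
  then have "nrm f * nrm g > 0"
    using nrm_nonneg[of f] nrm_nonneg[of g] by (simp add: less_le)
  moreover have "\<bar>ip f g\<bar> \<le> nrm f * nrm g"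
    using abs_ip_le_nrm_mult[OF assms] False by blast
  ultimately show ?thesis
    unfolding cosine_def by (metis abs_div_pos divide_le_eq_1_pos)
qed

lemma ip_trunc_tendsto:
  assumes "L2 f" "L2 g"
  shows "(\<lambda>n. ip (trunc (real n) f) (trunc (real n) g)) \<longlonglongrightarrow> ip f g"
  unfolding ip_def
proof (rule integral_dominated_convergence[where w = "\<lambda>t. \<bar>f t \<bullet> g t\<bar>"])
  have f: "f \<in> borel_measurable borel" and g: "g \<in> borel_measurable borel"
    using assms L2_measurable by auto
  show "(\<lambda>t. f t \<bullet> g t) \<in> borel_measurable lborel"
    using f g by simp measurable
  show "(\<lambda>t. trunc (real n) f t \<bullet> trunc (real n) g t) \<in> borel_measurable lborel" for n
    using trunc_measurable[OF f, of "real n"] trunc_measurable[OF g, of "real n"] by simp measurable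
  show "integrable lborel (\<lambda>t. \<bar>f t \<bullet> g t\<bar>)"
    using integrable_inner_L2[OF assms] by auto
  show "AE t in lborel. norm (trunc (real n) f t \<bullet> trunc (real n) g t) \<le> \<bar>f t \<bullet> g t\<bar>" for n
    by (auto simp: trunc_def)
  show "AE t in lborel. (\<lambda>n. trunc (real n) f t \<bullet> trunc (real n) g t) \<longlonglongrightarrow> f t \<bullet> g t"
  proof (intro AE_I2)
    fix t :: real
    obtain N :: nat where "t \<le> real N"
      using real_arch_simple by blast
    then have "\<forall>\<^sub>F n in sequentially. f t \<bullet> g t = trunc (real n) f t \<bullet> trunc (real n) g t"
      unfolding eventually_sequentially trunc_def by (intro exI[of _ N]) auto
    then show "(\<lambda>n. trunc (real n) f t \<bullet> trunc (real n) g t) \<longlonglongrightarrow> f t \<bullet> g t"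
      by (rule Lim_transform_eventually[OF tendsto_const])
  qed
qed

lemma nrm_trunc_tendsto: "L2 f \<Longrightarrow> (\<lambda>n. nrm (trunc (real n) f)) \<longlonglongrightarrow> nrm f"
  unfolding nrm_eq_sqrt_ip by (intro tendsto_real_sqrt ip_trunc_tendsto)

lemma cosine_trunc_tendsto:
  assumes "L2 f" "L2 g" "nrm f \<noteq> 0" "nrm g \<noteq> 0"
  shows "(\<lambda>n. cosine (trunc (real n) f) (trunc (real n) g)) \<longlonglongrightarrow> cosine f g"
  unfolding cosine_def
  using assms by (intro tendsto_divide tendsto_mult ip_trunc_tendsto nrm_trunc_tendsto) auto

lemma abs_L2_cosine_le_1: "stable P \<Longrightarrow> x \<in> L2_cosines P \<Longrightarrow> \<bar>x\<bar> \<le> 1"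
  unfolding L2_cosines_def stable_def L2p_def using abs_cosine_le_1 by blast

lemma abs_trunc_cosine_le_1: "is_system P \<Longrightarrow> y \<in> trunc_cosines P \<Longrightarrow> \<bar>y\<bar> \<le> 1"
  unfolding trunc_cosines_def is_system_def
  using abs_cosine_le_1 L2ep_trunc_L2 less_imp_le by blast

lemma trunc_cosinesE:
  assumes "is_system P" "causal P" "stable P" and "y \<in> trunc_cosines P"
  obtains v b where "L2p v" "nrm v \<noteq> 0" "0 < b" "b \<le> nrm (P v)"
    and "y = ip v (P v) / (nrm v * b)"
proof -
  obtain u T where y: "y = cosine (trunc T u) (trunc T (P u))"
    and u: "L2ep u" "T > 0" "nrm (trunc T u) \<noteq> 0" "nrm (trunc T (P u)) \<noteq> 0"
    using assms(4) unfolding trunc_cosines_def by blast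
  define v where "v = trunc T u"
  have "L2p v"
    using u unfolding v_def L2ep_def by auto
  then have "L2p (P v)"
    using assms(3) unfolding stable_def by blast
  have meas: "v \<in> borel_measurable borel" "trunc T (P u) \<in> borel_measurable borel"
    "trunc T (P v) \<in> borel_measurable borel"
    using \<open>L2p v\<close> \<open>L2p (P v)\<close> L2ep_trunc_L2[of "P u" T] assms(1) u(1,2)
    unfolding L2p_def is_system_def by (auto intro: L2_measurable trunc_measurable)
  have causality: "AE t in lborel. trunc T (P u) t = trunc T (P v) t"
    using assms(2) u(1,2) unfolding causal_def v_def by auto
  have "ip v (trunc T (P u)) = ip v (trunc T (P v))"
    using meas causality by (intro ip_cong_AE) auto
  also have "\<dots> = ip v (P v)"
    unfolding ip_def by (rule arg_cong[where f = "integral\<^sup>L lborel"]) (auto simp: v_def trunc_def)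
  finally have ip_eq: "ip v (trunc T (P u)) = ip v (P v)" .
  have "nrm (trunc T (P u)) = nrm (trunc T (P v))"
    using meas causality by (intro nrm_cong_AE)
  also have "\<dots> \<le> nrm (P v)"
    using \<open>L2p (P v)\<close> unfolding L2p_def by (intro nrm_trunc_le) auto
  finally show ?thesis
    using that[of v "nrm (trunc T (P u))"] \<open>L2p v\<close> u nrm_nonneg[of "trunc T (P u)"] ip_eq y
    unfolding cosine_def v_def[symmetric] by (simp add: less_le)
qed

lemma L2_cosines_subset_closure_trunc_cosines:
  assumes "stable P"
  shows "L2_cosines P \<subseteq> closure (trunc_cosines P)"
proof
  fix x assume "x \<in> L2_cosines P"
  then obtain u where x: "x = cosine u (P u)" and u: "L2p u" "nrm u \<noteq> 0" "nrm (P u) \<noteq> 0"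
    unfolding L2_cosines_def by blast
  have "L2p (P u)"
    using assms u(1) unfolding stable_def by blast
  then have L2: "L2 u" "L2 (P u)"
    using u(1) unfolding L2p_def by auto
  have "\<forall>\<^sub>F n in sequentially. nrm (trunc (real n) u) \<noteq> 0 \<and> nrm (trunc (real n) (P u)) \<noteq> 0 \<and> real n > 0"
    using tendsto_imp_eventually_ne[OF nrm_trunc_tendsto[OF L2(1)] u(2)]
      tendsto_imp_eventually_ne[OF nrm_trunc_tendsto[OF L2(2)] u(3)]
      eventually_gt_at_top[of 0]
    by eventually_elim auto
  then have "\<forall>\<^sub>F n in sequentially. cosine (trunc (real n) u) (trunc (real n) (P u)) \<in> trunc_cosines P"
    unfolding trunc_cosines_def by (elim eventually_mono) (use L2p_imp_L2ep[OF u(1)] in blast)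
  then show "x \<in> closure (trunc_cosines P)"
    unfolding x
    by (intro Lim_in_closed_set[OF closed_closure _ _ cosine_trunc_tendsto[OF L2 u(2,3)]])
       (auto elim!: eventually_mono intro: closure_subset[THEN subsetD])
qed

lemma L2_cosines_empty_iff:
  assumes "is_system P" "causal P" "stable P"
  shows "L2_cosines P = {} \<longleftrightarrow> trunc_cosines P = {}"
proof
  assume "L2_cosines P = {}"
  show "trunc_cosines P = {}"
  proof (rule ccontr)
    assume "trunc_cosines P \<noteq> {}"
    then obtain v b where "L2p v" "nrm v \<noteq> 0" "0 < b" "b \<le> nrm (P v)"
      using trunc_cosinesE[OF assms] by blast
    then have "cosine v (P v) \<in> L2_cosines P"
      unfolding L2_cosines_def by force
    with \<open>L2_cosines P = {}\<close> show False
      by blast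
  qed
next
  assume "trunc_cosines P = {}"
  then show "L2_cosines P = {}"
    using L2_cosines_subset_closure_trunc_cosines[OF assms(3)] by simp
qed

lemma Inf_trunc_cosines_le_Inf_L2_cosines:
  assumes "is_system P" "stable P" "L2_cosines P \<noteq> {}"
  shows "Inf (trunc_cosines P) \<le> Inf (L2_cosines P)"
proof (rule cInf_greatest[OF assms(3)])
  fix x assume "x \<in> L2_cosines P"
  have "bdd_below (trunc_cosines P)"
    using abs_trunc_cosine_le_1[OF assms(1)] by (meson abs_le_D2 bdd_belowI minus_le_iff)
  then have "closure (trunc_cosines P) \<subseteq> {Inf (trunc_cosines P)..}"
    by (intro closure_minimal) (auto intro: cInf_lower)
  with \<open>x \<in> L2_cosines P\<close> L2_cosines_subset_closure_trunc_cosines[OF assms(2)]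
  show "Inf (trunc_cosines P) \<le> x"
    by auto
qed

lemma Inf_L2_cosines_le_Inf_trunc_cosines:
  assumes "is_system P" "causal P" "stable P"
    and "trunc_cosines P \<noteq> {}" "Inf (L2_cosines P) \<ge> 0"
  shows "Inf (L2_cosines P) \<le> Inf (trunc_cosines P)"
proof (rule cInf_greatest[OF assms(4)])
  fix y assume "y \<in> trunc_cosines P"
  then obtain v b where v: "L2p v" "nrm v \<noteq> 0" and b: "0 < b" "b \<le> nrm (P v)"
    and y: "y = ip v (P v) / (nrm v * b)"
    using trunc_cosinesE[OF assms(1-3)] by blast
  have pos: "nrm v > 0" "nrm (P v) > 0"
    using v b nrm_nonneg[of v] by auto
  have "cosine v (P v) \<in> L2_cosines P"
    unfolding L2_cosines_def using v pos by force
  moreover have "bdd_below (L2_cosines P)"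
    using abs_L2_cosine_le_1[OF assms(3)] by (meson abs_le_D2 bdd_belowI minus_le_iff)
  ultimately have Inf_le: "Inf (L2_cosines P) \<le> cosine v (P v)"
    by (rule cInf_lower)
  then have "ip v (P v) / (nrm v * nrm (P v)) \<ge> 0"
    using assms(5) unfolding cosine_def by linarith
  then have "ip v (P v) \<ge> 0"
    using mult_pos_pos[OF pos] by (auto simp: zero_le_divide_iff)
  then have "cosine v (P v) \<le> y"
    unfolding cosine_def y using pos b by (intro divide_left_mono) auto
  with Inf_le show "Inf (L2_cosines P) \<le> y"
    by linarith
qed

theorem proposition9:
  fixes P :: "'n::finite signal \<Rightarrow> 'n signal"
  assumes "is_system P" and "causal P" and "stable P"
  shows "sangle P \<le> sangle_e P \<and> (0 \<le> sangle P \<and> sangle P \<le> pi / 2 \<longrightarrow> sangle P = sangle_e P)"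
proof (cases "L2_cosines P = {}")
  case True
  then have "sangle P = sangle_e P"
    using L2_cosines_empty_iff[OF assms] by (simp add: sangle_eq_arccos_Inf sangle_e_eq_arccos_Inf)
  then show ?thesis
    by simp
next
  case False
  then have "trunc_cosines P \<noteq> {}"
    using L2_cosines_empty_iff[OF assms] by blast
  have bounds: "\<bar>Inf (L2_cosines P)\<bar> \<le> 1" "\<bar>Inf (trunc_cosines P)\<bar> \<le> 1"
    using False \<open>trunc_cosines P \<noteq> {}\<close> abs_L2_cosine_le_1[OF assms(3)] abs_trunc_cosine_le_1[OF assms(1)]
    by (blast intro: cInf_abs_ge)+
  have Inf_le: "Inf (trunc_cosines P) \<le> Inf (L2_cosines P)"
    using Inf_trunc_cosines_le_Inf_L2_cosines[OF assms(1,3) False] .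
  then have "sangle P \<le> sangle_e P"
    unfolding sangle_eq_arccos_Inf sangle_e_eq_arccos_Inf using bounds by (simp add: arccos_le_mono)
  moreover have "sangle P = sangle_e P" if "sangle P \<le> pi / 2"
  proof -
    have "0 \<le> Inf (L2_cosines P)"
      using that bounds(1) arccos_le_mono[of "Inf (L2_cosines P)" 0]
      by (simp add: sangle_eq_arccos_Inf)
    with Inf_le Inf_L2_cosines_le_Inf_trunc_cosines[OF assms \<open>trunc_cosines P \<noteq> {}\<close>]
    show ?thesis
      by (simp add: sangle_eq_arccos_Inf sangle_e_eq_arccos_Inf)
  qed
  ultimately show ?thesis
    by blast
qed

end
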